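(* Let $K$ be a field, $X$ a finite connected poset, $\varphi$ an elementary Lie automorphism of $I(X,K)$, $\theta=\theta_\varphi$, and $x<y$ with $\theta(e_{xy})=e_{uv}$. Then for all $z\in X$, $$\varphi(e_z)(v,v)-\varphi(e_z)(u,u)=\begin{cases}-1,& z=x,\\ 1,& z=y,\\ 0,& z\notin\{x,y\}.\end{cases}$$
   Context: $I(X,K)$ is the incidence algebra: functions $f:X\times X\to K$ with $f(x,y)=0$ unless $x\le y$, product $(fg)(x,y)=\sum_{x\le t\le y}f(x,t)g(t,y)$; $e_{xy}$ ($x\le y$) is the basis element equal to $1$ at $(x,y)$ and $0$ elsewhere, $e_z=e_{zz}$. $B=\{e_{xy}:x<y\}$. A Lie automorphism is a bijective linear map preserving $[f,g]=fg-gf$. With $l(\lfloor x,y\rfloor)$ the maximal length of a chain in $\{z:x\le z\le y\}$ and $L_i=\mathrm{span}_K\{e_{xy}:l(\lfloor x,y\rfloor)=i\}$, for a Lie automorphism $\psi$ let $\widetilde\psi$ send $e_{xy}\in L_i$ to the $L_i$-component of $\psi(e_{xy})$. A Lie automorphism $\varphi$ is elementary if $\varphi=\widetilde\psi$ for some Lie automorphism $\psi$ (equivalently $\varphi(L_i)\subseteq L_i$ for all $i$). For elementary $\varphi$, for each $x<y$ there are a unique $e_{uv}\in B$ and $k\in K^*$ with $\varphi(e_{xy})=k e_{uv}$; set $\theta_\varphi(e_{xy})=e_{uv}$. Connected means any two elements are joined by a sequence in which consecutive elements are in a covering relation. *)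

theory Defs
  imports Main
begin

text \<open>The finite poset X is the (finite) type 'a with its order; K is the field 'k.
  Elements of the incidence algebra I(X,K) are functions f :: 'a => 'a => 'k
  vanishing outside the order relation.\<close>

definition inc_alg :: "('a::order \<Rightarrow> 'a \<Rightarrow> 'k::field) set" where
  "inc_alg = {f. \<forall>x y. \<not> x \<le> y \<longrightarrow> f x y = 0}"

definition inc_mult :: "('a::order \<Rightarrow> 'a \<Rightarrow> 'k::field) \<Rightarrow> ('a \<Rightarrow> 'a \<Rightarrow> 'k) \<Rightarrow> 'a \<Rightarrow> 'a \<Rightarrow> 'k" where
  "inc_mult f g x y = (\<Sum>t\<in>{t. x \<le> t \<and> t \<le> y}. f x t * g t y)"

definition lie_br :: "('a::order \<Rightarrow> 'a \<Rightarrow> 'k::field) \<Rightarrow> ('a \<Rightarrow> 'a \<Rightarrow> 'k) \<Rightarrow> 'a \<Rightarrow> 'a \<Rightarrow> 'k" where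
  "lie_br f g = (\<lambda>x y. inc_mult f g x y - inc_mult g f x y)"

definition E :: "'a::order \<Rightarrow> 'a \<Rightarrow> 'a \<Rightarrow> 'a \<Rightarrow> 'k::field" where
  "E x y = (\<lambda>a b. if a = x \<and> b = y then 1 else 0)"

definition lie_aut :: "(('a::order \<Rightarrow> 'a \<Rightarrow> 'k::field) \<Rightarrow> ('a \<Rightarrow> 'a \<Rightarrow> 'k)) \<Rightarrow> bool" where
  "lie_aut \<phi> \<longleftrightarrow>
     bij_betw \<phi> inc_alg inc_alg \<and>
     (\<forall>f\<in>inc_alg. \<forall>g\<in>inc_alg. \<phi> (\<lambda>a b. f a b + g a b) = (\<lambda>a b. \<phi> f a b + \<phi> g a b)) \<and>
     (\<forall>c. \<forall>f\<in>inc_alg. \<phi> (\<lambda>a b. c * f a b) = (\<lambda>a b. c * \<phi> f a b)) \<and>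
     (\<forall>f\<in>inc_alg. \<forall>g\<in>inc_alg. \<phi> (lie_br f g) = lie_br (\<phi> f) (\<phi> g))"

definition int_len :: "'a::{order,finite} \<Rightarrow> 'a \<Rightarrow> nat" where
  "int_len x y = Max {length cs - 1 | cs. cs \<noteq> [] \<and> sorted_wrt (<) cs \<and>
                                          set cs \<subseteq> {z. x \<le> z \<and> z \<le> y}}"

definition L_comp :: "nat \<Rightarrow> ('a::{order,finite} \<Rightarrow> 'a \<Rightarrow> 'k::field) \<Rightarrow> 'a \<Rightarrow> 'a \<Rightarrow> 'k" where
  "L_comp i g = (\<lambda>a b. if a \<le> b \<and> int_len a b = i then g a b else 0)"

text \<open>\<psi>~ : the linear map sending e_xy to the L_{l(x,y)}-component of \<psi>(e_xy)\<close>
definition tilde :: "(('a::{order,finite} \<Rightarrow> 'a \<Rightarrow> 'k::field) \<Rightarrow> ('a \<Rightarrow> 'a \<Rightarrow> 'k))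
                      \<Rightarrow> ('a \<Rightarrow> 'a \<Rightarrow> 'k) \<Rightarrow> ('a \<Rightarrow> 'a \<Rightarrow> 'k)" where
  "tilde \<psi> f = (\<lambda>a b. \<Sum>p\<in>{(x, y). x \<le> y}.
                     f (fst p) (snd p) * L_comp (int_len (fst p) (snd p)) (\<psi> (E (fst p) (snd p))) a b)"

definition elementary :: "(('a::{order,finite} \<Rightarrow> 'a \<Rightarrow> 'k::field) \<Rightarrow> ('a \<Rightarrow> 'a \<Rightarrow> 'k)) \<Rightarrow> bool" where
  "elementary \<phi> \<longleftrightarrow> lie_aut \<phi> \<and> (\<exists>\<psi>. lie_aut \<psi> \<and> (\<forall>f\<in>inc_alg. \<phi> f = tilde \<psi> f))"

definition covers :: "'a::order \<Rightarrow> 'a \<Rightarrow> bool" where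
  "covers a b \<longleftrightarrow> a < b \<and> \<not> (\<exists>c. a < c \<and> c < b)"

definition poset_connected :: "'a::order itself \<Rightarrow> bool" where
  "poset_connected _ \<longleftrightarrow> (\<forall>a b::'a. (\<lambda>p q. covers p q \<or> covers q p)\<^sup>*\<^sup>* a b)"

end

theory Submission
  imports Defs
begin

text \<open>Since \<open>e\<^sub>z\<close> is idempotent, \<open>[e\<^sub>z, e\<^sub>x\<^sub>y] = (\<delta>\<^sub>z\<^sub>x - \<delta>\<^sub>z\<^sub>y) e\<^sub>x\<^sub>y\<close>. Applying the Lie
  automorphism \<open>\<phi>\<close> gives \<open>[\<phi>(e\<^sub>z), k e\<^sub>u\<^sub>v] = (\<delta>\<^sub>z\<^sub>x - \<delta>\<^sub>z\<^sub>y) k e\<^sub>u\<^sub>v\<close>, and the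
  \<open>(u,v)\<close>-entry of \<open>[g, e\<^sub>u\<^sub>v]\<close> is \<open>g(u,u) - g(v,v)\<close>.\<close>

lemma E_in_inc_alg: "p \<le> q \<Longrightarrow> E p q \<in> inc_alg"
  unfolding inc_alg_def E_def by auto

lemma lie_aut_lie_br:
  "lie_aut \<phi> \<Longrightarrow> f \<in> inc_alg \<Longrightarrow> g \<in> inc_alg \<Longrightarrow> \<phi> (lie_br f g) = lie_br (\<phi> f) (\<phi> g)"
  unfolding lie_aut_def by blast

lemma lie_aut_smult:
  "lie_aut \<phi> \<Longrightarrow> f \<in> inc_alg \<Longrightarrow> \<phi> (\<lambda>a b. c * f a b) = (\<lambda>a b. c * \<phi> f a b)"
  unfolding lie_aut_def by blast

lemma inc_mult_E_left:
  fixes g :: "'a::{order,finite} \<Rightarrow> 'a \<Rightarrow> 'k::field"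
  shows "inc_mult (E p q) g a b = (if a = p \<and> a \<le> q \<and> q \<le> b then g q b else 0)"
proof -
  have "inc_mult (E p q) g a b =
      (\<Sum>t\<in>{t. a \<le> t \<and> t \<le> b}. if t = q then (if a = p then g q b else 0) else 0)"
    unfolding inc_mult_def E_def by (rule sum.cong) auto
  then show ?thesis
    by (auto simp: sum.delta)
qed

lemma inc_mult_E_right:
  fixes g :: "'a::{order,finite} \<Rightarrow> 'a \<Rightarrow> 'k::field"
  shows "inc_mult g (E p q) a b = (if b = q \<and> a \<le> p \<and> p \<le> b then g a p else 0)"
proof -
  have "inc_mult g (E p q) a b =
      (\<Sum>t\<in>{t. a \<le> t \<and> t \<le> b}. if t = p then (if b = q then g a p else 0) else 0)"
    unfolding inc_mult_def E_def by (rule sum.cong) auto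
  then show ?thesis
    by (auto simp: sum.delta)
qed

lemma lie_br_E_diag_E:
  fixes x y z :: "'a::{order,finite}"
  assumes "x \<le> y"
  shows "lie_br (E z z) (E x y) =
    (\<lambda>a b. ((if z = x then 1 else 0) - (if z = y then 1 else 0)) * (E x y a b :: 'k::field))"
  using assms unfolding lie_br_def fun_eq_iff inc_mult_E_left inc_mult_E_right
  by (auto simp: E_def)

lemma lie_br_smult_E_entry:
  fixes g :: "'a::{order,finite} \<Rightarrow> 'a \<Rightarrow> 'k::field"
  assumes "u \<le> v"
  shows "lie_br g (\<lambda>a b. k * E u v a b) u v = k * (g u u - g v v)"
proof -
  have "inc_mult g (\<lambda>a b. k * E u v a b) u v = k * inc_mult g (E u v) u v"
    unfolding inc_mult_def by (simp add: sum_distrib_left mult.left_commute)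
  moreover have "inc_mult (\<lambda>a b. k * E u v a b) g u v = k * inc_mult (E u v) g u v"
    unfolding inc_mult_def by (simp add: sum_distrib_left mult.assoc)
  ultimately show ?thesis
    using assms by (simp add: lie_br_def inc_mult_E_left inc_mult_E_right right_diff_distrib)
qed

lemma lie_aut_E_diag_entry_diff:
  fixes \<phi> :: "('a::{order,finite} \<Rightarrow> 'a \<Rightarrow> 'k::field) \<Rightarrow> ('a \<Rightarrow> 'a \<Rightarrow> 'k)"
  assumes \<phi>: "lie_aut \<phi>"
    and "x \<le> y" and "u \<le> v" and "k \<noteq> 0"
    and \<phi>_E: "\<phi> (E x y) = (\<lambda>a b. k * E u v a b)"
  shows "\<phi> (E z z) v v - \<phi> (E z z) u u = (if z = y then 1 else 0) - (if z = x then 1 else 0)"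
proof -
  define c :: 'k where "c = (if z = x then 1 else 0) - (if z = y then 1 else 0)"
  have "lie_br (\<phi> (E z z)) (\<phi> (E x y)) = \<phi> (lie_br (E z z) (E x y))"
    using \<phi> \<open>x \<le> y\<close> by (simp add: lie_aut_lie_br E_in_inc_alg)
  also have "\<dots> = (\<lambda>a b. c * \<phi> (E x y) a b)"
    using \<phi> \<open>x \<le> y\<close> by (simp add: lie_br_E_diag_E lie_aut_smult E_in_inc_alg c_def)
  finally have "lie_br (\<phi> (E z z)) (\<lambda>a b. k * E u v a b) u v = c * (k * E u v u v)"
    unfolding \<phi>_E by metis
  then have "k * (\<phi> (E z z) u u - \<phi> (E z z) v v) = k * c"
    using \<open>u \<le> v\<close> by (simp add: lie_br_smult_E_entry) (simp add: E_def)
  with \<open>k \<noteq> 0\<close> have "\<phi> (E z z) u u - \<phi> (E z z) v v = c"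
    by simp
  then show ?thesis
    unfolding c_def by (simp add: algebra_simps)
qed

theorem lemma5p7:
  fixes \<phi> :: "('a::{order,finite} \<Rightarrow> 'a \<Rightarrow> 'k::field) \<Rightarrow> ('a \<Rightarrow> 'a \<Rightarrow> 'k)"
    and x y u v z :: 'a and k :: 'k
  assumes conn: "poset_connected TYPE('a)"
    and elem: "elementary \<phi>"
    and xy: "x < y"
    and uv: "u < v" and k: "k \<noteq> 0"
    and theta: "\<phi> (E x y) = (\<lambda>a b. k * E u v a b)"
  shows "\<phi> (E z z) v v - \<phi> (E z z) u u =
           (if z = x then -1 else if z = y then 1 else 0)"
proof -
  have "lie_aut \<phi>"
    using elem unfolding elementary_def by blast
  then have "\<phi> (E z z) v v - \<phi> (E z z) u u = (if z = y then 1 else 0) - (if z = x then 1 else 0)"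
    using xy uv k theta by (simp add: lie_aut_E_diag_entry_diff)
  then show ?thesis
    using xy by auto
qed

end
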